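(* Let $q\in\mathbb{C}$ with $|q|=1$, not a root of unity, with a fixed square root $q^{1/2}$. Let $\mathcal{A}=SL_q(2,\mathbb{R})$ be the Hopf $*$-algebra generated by self-adjoint $a,b,c,d$ with relations $ab=q\,ba$, $ac=q\,ca$, $bc=cb$, $bd=q\,db$, $cd=q\,dc$, $da-q^{-1}bc=1=ad-q\,bc$, comultiplication $\Delta(a)=a\otimes a+b\otimes c$, $\Delta(b)=a\otimes b+b\otimes d$, $\Delta(c)=c\otimes a+d\otimes c$, $\Delta(d)=c\otimes b+d\otimes d$, counit $\varepsilon(a)=\varepsilon(d)=1$, $\varepsilon(b)=\varepsilon(c)=0$, and antipode $S(a)=d$, $S(b)=-q^{-1}b$, $S(c)=-q\,c$, $S(d)=a$. Put $\tau=*\circ S$. For $\mu,\nu\in\mathbb{R}$ let $\mathcal{C}_{\mu\nu}$ be the linear span of $a-d+2q^{1/2}\mu\,b$ and $q\nu\,b+c$. Then $\mathcal{C}_{\mu\nu}$ is a $\tau$-invariant two-sided coideal of $\mathcal{A}$.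
   Context: A two-sided coideal $I$ is a subspace with $\varepsilon(I)=0$ and $\Delta(I)\subset I\otimes\mathcal{A}+\mathcal{A}\otimes I$; $\tau$-invariant means $\tau(I)\subset I$. *)

theory Defs
  imports Complex_Main
begin

text \<open>A complex algebra is modelled as a ring 'a together with a central unital ring
  homomorphism iota from the complex numbers; scalar multiplication z.x is iota z * x.\<close>

definition C_algebra :: "(complex \<Rightarrow> 'a::ring_1) \<Rightarrow> bool" where
  "C_algebra \<iota> \<longleftrightarrow> \<iota> 0 = 0 \<and> \<iota> 1 = 1 \<and>
     (\<forall>z w. \<iota> (z + w) = \<iota> z + \<iota> w) \<and> (\<forall>z w. \<iota> (z * w) = \<iota> z * \<iota> w) \<and>
     (\<forall>z x. \<iota> z * x = x * \<iota> z)"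

definition lin_span :: "(complex \<Rightarrow> 'a::ring_1) \<Rightarrow> 'a set \<Rightarrow> 'a set" where
  "lin_span \<iota> S = {(\<Sum>v\<in>F. \<iota> (k v) * v) | k F. finite F \<and> F \<subseteq> S}"

inductive_set gen_alg :: "(complex \<Rightarrow> 'a::ring_1) \<Rightarrow> 'a set \<Rightarrow> 'a set"
  for \<iota> :: "complex \<Rightarrow> 'a" and G :: "'a set" where
  gen: "x \<in> G \<Longrightarrow> x \<in> gen_alg \<iota> G"
| scal: "\<iota> z \<in> gen_alg \<iota> G"
| add: "x \<in> gen_alg \<iota> G \<Longrightarrow> y \<in> gen_alg \<iota> G \<Longrightarrow> x + y \<in> gen_alg \<iota> G"
| mult: "x \<in> gen_alg \<iota> G \<Longrightarrow> y \<in> gen_alg \<iota> G \<Longrightarrow> x * y \<in> gen_alg \<iota> G"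

definition tensor_alg :: "(complex \<Rightarrow> 'a::ring_1) \<Rightarrow> (complex \<Rightarrow> 't::ring_1) \<Rightarrow> ('a \<Rightarrow> 'a \<Rightarrow> 't) \<Rightarrow> bool" where
  "tensor_alg \<iota> \<iota>T tns \<longleftrightarrow> C_algebra \<iota>T \<and>
     (\<forall>x y z. tns (x + y) z = tns x z + tns y z) \<and>
     (\<forall>x y z. tns x (y + z) = tns x y + tns x z) \<and>
     (\<forall>k x y. tns (\<iota> k * x) y = \<iota>T k * tns x y) \<and>
     (\<forall>k x y. tns x (\<iota> k * y) = \<iota>T k * tns x y) \<and>
     (\<forall>x y x' y'. tns x y * tns x' y' = tns (x * x') (y * y')) \<and>
     tns 1 1 = 1 \<and>
     lin_span \<iota>T {tns x y | x y. True} = UNIV"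

definition SLq2R ::
  "complex \<Rightarrow> (complex \<Rightarrow> 'a::ring_1) \<Rightarrow> (complex \<Rightarrow> 't::ring_1) \<Rightarrow> ('a \<Rightarrow> 'a \<Rightarrow> 't) \<Rightarrow>
   ('a \<Rightarrow> 'a) \<Rightarrow> ('a \<Rightarrow> 't) \<Rightarrow> ('a \<Rightarrow> complex) \<Rightarrow> ('a \<Rightarrow> 'a) \<Rightarrow> 'a \<Rightarrow> 'a \<Rightarrow> 'a \<Rightarrow> 'a \<Rightarrow> bool" where
  "SLq2R q \<iota> \<iota>T tns st Dl ep S a b c d \<longleftrightarrow>
     C_algebra \<iota> \<and> tensor_alg \<iota> \<iota>T tns \<and>
     \<comment> \<open>generation\<close>
     gen_alg \<iota> {a, b, c, d} = UNIV \<and>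
     \<comment> \<open>star: antilinear anti-multiplicative involution\<close>
     (\<forall>x y. st (x + y) = st x + st y) \<and> (\<forall>x y. st (x * y) = st y * st x) \<and>
     (\<forall>x. st (st x) = x) \<and> (\<forall>z. st (\<iota> z) = \<iota> (cnj z)) \<and>
     \<comment> \<open>comultiplication: unital algebra homomorphism\<close>
     (\<forall>x y. Dl (x + y) = Dl x + Dl y) \<and> (\<forall>x y. Dl (x * y) = Dl x * Dl y) \<and>
     (\<forall>z. Dl (\<iota> z) = \<iota>T z) \<and>
     \<comment> \<open>counit: unital algebra homomorphism to the complex numbers\<close>
     (\<forall>x y. ep (x + y) = ep x + ep y) \<and> (\<forall>x y. ep (x * y) = ep x * ep y) \<and>
     (\<forall>z. ep (\<iota> z) = z) \<and>
     \<comment> \<open>antipode: unital linear anti-homomorphism\<close>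
     (\<forall>x y. S (x + y) = S x + S y) \<and> (\<forall>x y. S (x * y) = S y * S x) \<and>
     (\<forall>z. S (\<iota> z) = \<iota> z) \<and>
     \<comment> \<open>self-adjoint generators\<close>
     st a = a \<and> st b = b \<and> st c = c \<and> st d = d \<and>
     \<comment> \<open>relations\<close>
     a * b = \<iota> q * (b * a) \<and> a * c = \<iota> q * (c * a) \<and> b * c = c * b \<and>
     b * d = \<iota> q * (d * b) \<and> c * d = \<iota> q * (d * c) \<and>
     d * a - \<iota> (inverse q) * (b * c) = 1 \<and> a * d - \<iota> q * (b * c) = 1 \<and>
     \<comment> \<open>coproduct, counit, antipode on generators\<close>
     Dl a = tns a a + tns b c \<and> Dl b = tns a b + tns b d \<and>
     Dl c = tns c a + tns d c \<and> Dl d = tns c b + tns d d \<and>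
     ep a = 1 \<and> ep d = 1 \<and> ep b = 0 \<and> ep c = 0 \<and>
     S a = d \<and> S b = - (\<iota> (inverse q) * b) \<and> S c = - (\<iota> q * c) \<and> S d = a"

definition two_sided_coideal ::
  "(complex \<Rightarrow> 't::ring_1) \<Rightarrow> ('a \<Rightarrow> 'a \<Rightarrow> 't) \<Rightarrow> ('a \<Rightarrow> 't) \<Rightarrow> ('a \<Rightarrow> complex) \<Rightarrow> 'a set \<Rightarrow> bool" where
  "two_sided_coideal \<iota>T tns Dl ep I \<longleftrightarrow>
     (\<forall>x\<in>I. ep x = 0) \<and>
     (\<forall>x\<in>I. Dl x \<in> lin_span \<iota>T ({tns i y | i y. i \<in> I} \<union> {tns y i | i y. i \<in> I}))"

definition tau_invariant :: "('a \<Rightarrow> 'a) \<Rightarrow> ('a \<Rightarrow> 'a) \<Rightarrow> 'a set \<Rightarrow> bool" where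
  "tau_invariant st S I \<longleftrightarrow> (\<forall>x\<in>I. st (S x) \<in> I)"

end

theory Submission
  imports Defs
begin

text \<open>Put \<open>X = a - d + m b\<close> and \<open>Y = n b + c\<close>. Both are killed by the counit, and
  for arbitrary complex \<open>m\<close>, \<open>n\<close> their coproducts are combinations of elementary
  tensors having \<open>X\<close> or \<open>Y\<close> in one leg:
  \<open>\<Delta>X = X\<otimes>a + d\<otimes>X + m (X\<otimes>b - b\<otimes>X) + b\<otimes>Y - Y\<otimes>b\<close> and
  \<open>\<Delta>Y = Y\<otimes>a + d\<otimes>Y + n (X\<otimes>b - b\<otimes>X)\<close>.
  Moreover \<open>\<tau>X = -X\<close> once \<open>cnj (m/q) = m\<close>, and \<open>\<tau>Y = -Y/q\<close> once \<open>|q| = 1\<close>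
  and \<open>n/q\<close> is real; for \<open>m = 2 q\<^sup>1\<^sup>/\<^sup>2 \<mu>\<close> and \<open>n = q \<nu>\<close> these
  conditions hold because \<open>\<mu>\<close>, \<open>\<nu>\<close> are real and \<open>|q\<^sup>1\<^sup>/\<^sup>2| = 1\<close>.
  As \<open>\<Delta>\<close> and \<open>\<epsilon>\<close> are linear and \<open>\<tau>\<close> is antilinear, everything passes from
  the two generators to their span.\<close>

lemma C_algebraD:
  assumes "C_algebra \<iota>"
  shows "\<iota> 0 = 0" "\<iota> 1 = 1" "\<iota> (z + w) = \<iota> z + \<iota> w" "\<iota> (z * w) = \<iota> z * \<iota> w"
    "\<iota> z * x = x * \<iota> z"
  using assms unfolding C_algebra_def by blast+

lemma C_algebra_additive: "C_algebra \<iota> \<Longrightarrow> additive \<iota>"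
  unfolding C_algebra_def additive_def by blast

lemma lin_spanI: "finite F \<Longrightarrow> F \<subseteq> S \<Longrightarrow> (\<Sum>v\<in>F. \<iota> (k v) * v) \<in> lin_span \<iota> S"
  unfolding lin_span_def by blast

lemma lin_spanE:
  assumes "x \<in> lin_span \<iota> S"
  obtains k F where "x = (\<Sum>v\<in>F. \<iota> (k v) * v)" "finite F" "F \<subseteq> S"
  using assms unfolding lin_span_def by blast

lemma lin_span_base:
  assumes "C_algebra \<iota>" "v \<in> S"
  shows "v \<in> lin_span \<iota> S"
proof -
  have "v = (\<Sum>w\<in>{v}. \<iota> 1 * w)"
    by (simp add: C_algebraD(2)[OF assms(1)])
  also have "\<dots> \<in> lin_span \<iota> S"
    using assms(2) by (intro lin_spanI) auto
  finally show ?thesis .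
qed

lemma lin_span_zero: "0 \<in> lin_span \<iota> S"
  using lin_spanI[of "{}" S \<iota>] by simp

lemma lin_span_scale:
  assumes "C_algebra \<iota>" "x \<in> lin_span \<iota> S"
  shows "\<iota> z * x \<in> lin_span \<iota> S"
proof -
  obtain k F where x: "x = (\<Sum>v\<in>F. \<iota> (k v) * v)" "finite F" "F \<subseteq> S"
    using assms(2) by (rule lin_spanE)
  have "\<iota> z * x = (\<Sum>v\<in>F. \<iota> (z * k v) * v)"
    unfolding x(1) sum_distrib_left by (simp add: C_algebraD(4)[OF assms(1)] mult.assoc)
  also have "\<dots> \<in> lin_span \<iota> S"
    using x(2,3) by (rule lin_spanI)
  finally show ?thesis .
qed

lemma lin_span_add:
  assumes "C_algebra \<iota>" "x \<in> lin_span \<iota> S" "y \<in> lin_span \<iota> S"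
  shows "x + y \<in> lin_span \<iota> S"
proof -
  obtain k F where x: "x = (\<Sum>v\<in>F. \<iota> (k v) * v)" "finite F" "F \<subseteq> S"
    using assms(2) by (rule lin_spanE)
  obtain l G where y: "y = (\<Sum>v\<in>G. \<iota> (l v) * v)" "finite G" "G \<subseteq> S"
    using assms(3) by (rule lin_spanE)
  define H where "H = F \<union> G"
  have H: "finite H" "H \<subseteq> S"
    using x(2,3) y(2,3) unfolding H_def by auto
  have extend: "(\<Sum>v\<in>A. \<iota> (h v) * v) = (\<Sum>v\<in>H. \<iota> (if v \<in> A then h v else 0) * v)"
    if "A \<subseteq> H" for A h
    using that H(1) by (intro sum.mono_neutral_cong_left) (auto simp: C_algebraD(1)[OF assms(1)])
  have "x + y = (\<Sum>v\<in>H. \<iota> (if v \<in> F then k v else 0) * v + \<iota> (if v \<in> G then l v else 0) * v)"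
    unfolding x(1) y(1) sum.distrib extend[of F k, OF Un_upper1[of F G, folded H_def]]
      extend[of G l, OF Un_upper2[of G F, folded H_def]] ..
  also have "\<dots> = (\<Sum>v\<in>H. \<iota> ((if v \<in> F then k v else 0) + (if v \<in> G then l v else 0)) * v)"
    by (simp only: C_algebraD(3)[OF assms(1)] distrib_right)
  also have "\<dots> \<in> lin_span \<iota> S"
    using H by (rule lin_spanI)
  finally show ?thesis .
qed

lemma lin_span_diff:
  assumes "C_algebra \<iota>" "x \<in> lin_span \<iota> S" "y \<in> lin_span \<iota> S"
  shows "x - y \<in> lin_span \<iota> S"
proof -
  have "\<iota> (- 1) * y = - y"
    using additive.minus[OF C_algebra_additive[OF assms(1)]] by (simp add: C_algebraD(2)[OF assms(1)])
  then have "x - y = x + \<iota> (- 1) * y"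
    by simp
  also have "\<dots> \<in> lin_span \<iota> S"
    by (intro lin_span_add lin_span_scale assms)
  finally show ?thesis .
qed

lemma lin_span_sum:
  assumes "C_algebra \<iota>" "\<And>i. i \<in> A \<Longrightarrow> g i \<in> lin_span \<iota> S"
  shows "sum g A \<in> lin_span \<iota> S"
  using assms(2)
  by (induction A rule: infinite_finite_induct) (simp_all add: lin_span_zero lin_span_add[OF assms(1)])

lemma image_lin_span_subset:
  assumes "C_algebra \<iota>'" "additive f" "\<And>z x. f (\<iota> z * x) = \<iota>' (\<sigma> z) * f x"
    and "f ` S \<subseteq> lin_span \<iota>' T"
  shows "f ` lin_span \<iota> S \<subseteq> lin_span \<iota>' T"
proof clarify
  fix x assume "x \<in> lin_span \<iota> S"
  then obtain k F where x: "x = (\<Sum>v\<in>F. \<iota> (k v) * v)" "finite F" "F \<subseteq> S"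
    by (rule lin_spanE)
  have "f x = (\<Sum>v\<in>F. \<iota>' (\<sigma> (k v)) * f v)"
    unfolding x(1) additive.sum[OF assms(2)] assms(3) ..
  also have "\<dots> \<in> lin_span \<iota>' T"
    using x(3) assms(4) by (intro lin_span_sum lin_span_scale assms(1)) auto
  finally show "f x \<in> lin_span \<iota>' T" .
qed

lemma image_lin_span_subset_zero:
  assumes "additive f" "\<And>z x. f (\<iota> z * x) = z * f x" and "f ` S \<subseteq> {0}"
  shows "f ` lin_span \<iota> S \<subseteq> {0}"
proof clarify
  fix x assume "x \<in> lin_span \<iota> S"
  then obtain k F where x: "x = (\<Sum>v\<in>F. \<iota> (k v) * v)" "finite F" "F \<subseteq> S"
    by (rule lin_spanE)
  have "f x = (\<Sum>v\<in>F. k v * f v)"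
    unfolding x(1) additive.sum[OF assms(1)] assms(2) ..
  also have "\<dots> = 0"
    using x(3) assms(3) by (intro sum.neutral) auto
  finally show "f x = 0" .
qed

lemma cnj_eq_inverse_if_norm_1: "norm z = 1 \<Longrightarrow> cnj z = inverse z"
  using complex_norm_square[of z] by (simp add: inverse_unique)

locale SLq2R_algebra =
  fixes q :: complex and \<iota> :: "complex \<Rightarrow> 'a::ring_1" and \<iota>T :: "complex \<Rightarrow> 't::ring_1"
    and tns :: "'a \<Rightarrow> 'a \<Rightarrow> 't" and st :: "'a \<Rightarrow> 'a" and Dl :: "'a \<Rightarrow> 't"
    and ep :: "'a \<Rightarrow> complex" and S :: "'a \<Rightarrow> 'a" and a b c d :: 'a
  assumes SLq2R: "SLq2R q \<iota> \<iota>T tns st Dl ep S a b c d"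
begin

lemma C_algebra_iota: "C_algebra \<iota>"
  using SLq2R unfolding SLq2R_def by blast

lemma tensor_alg_tns: "tensor_alg \<iota> \<iota>T tns"
  using SLq2R unfolding SLq2R_def by blast

lemma C_algebra_iotaT: "C_algebra \<iota>T"
  using tensor_alg_tns unfolding tensor_alg_def by blast

lemma tns_additive: "additive (\<lambda>x. tns x y)" "additive (tns x)"
  using tensor_alg_tns unfolding tensor_alg_def additive_def by blast+

lemma tns_scale: "tns (\<iota> k * x) y = \<iota>T k * tns x y" "tns x (\<iota> k * y) = \<iota>T k * tns x y"
  using tensor_alg_tns unfolding tensor_alg_def by blast+

lemma maps_additive: "additive st" "additive Dl" "additive ep" "additive S"
  using SLq2R unfolding SLq2R_def additive_def by simp_all

lemma maps_multiplicative:
  "st (x * y) = st y * st x" "st (\<iota> z) = \<iota> (cnj z)"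
  "Dl (x * y) = Dl x * Dl y" "Dl (\<iota> z) = \<iota>T z"
  "ep (x * y) = ep x * ep y" "ep (\<iota> z) = z"
  "S (x * y) = S y * S x" "S (\<iota> z) = \<iota> z"
  using SLq2R unfolding SLq2R_def by blast+

lemma maps_scale:
  "st (\<iota> z * x) = \<iota> (cnj z) * st x" "Dl (\<iota> z * x) = \<iota>T z * Dl x"
  "ep (\<iota> z * x) = z * ep x" "S (\<iota> z * x) = \<iota> z * S x"
  by (simp_all add: maps_multiplicative
      C_algebraD(5)[OF C_algebra_iota] C_algebraD(5)[OF C_algebra_iotaT])

lemma maps_on_generators:
  "st a = a" "st b = b" "st c = c" "st d = d"
  "Dl a = tns a a + tns b c" "Dl b = tns a b + tns b d"
  "Dl c = tns c a + tns d c" "Dl d = tns c b + tns d d"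
  "ep a = 1" "ep d = 1" "ep b = 0" "ep c = 0"
  "S a = d" "S b = - (\<iota> (inverse q) * b)" "S c = - (\<iota> q * c)" "S d = a"
  using SLq2R unfolding SLq2R_def by blast+

lemma tau_additive: "additive (\<lambda>x. st (S x))"
  using maps_additive(1,4) unfolding additive_def by simp

lemma tau_scale: "st (S (\<iota> z * x)) = \<iota> (cnj z) * st (S x)"
  by (simp add: maps_scale)

definition X :: "complex \<Rightarrow> 'a" where "X m = a - d + \<iota> m * b"

definition Y :: "complex \<Rightarrow> 'a" where "Y n = \<iota> n * b + c"

lemma ep_X: "ep (X m) = 0"
  unfolding X_def by (simp add: additive.add[OF maps_additive(3)]
      additive.diff[OF maps_additive(3)] maps_scale maps_on_generators)

lemma ep_Y: "ep (Y n) = 0"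
  unfolding Y_def by (simp add: additive.add[OF maps_additive(3)] maps_scale maps_on_generators)

lemmas tns_linear = additive.add[OF tns_additive(1)] additive.add[OF tns_additive(2)]
  additive.diff[OF tns_additive(1)] additive.diff[OF tns_additive(2)] tns_scale

lemma Dl_X:
  "Dl (X m) = tns (X m) a + tns d (X m) + \<iota>T m * tns (X m) b - \<iota>T m * tns b (X m)
     + tns b (Y n) - tns (Y n) b"
proof -
  have "Dl (X m) = tns a a + tns b c - (tns c b + tns d d) + \<iota>T m * (tns a b + tns b d)"
    unfolding X_def by (simp add: additive.add[OF maps_additive(2)]
        additive.diff[OF maps_additive(2)] maps_scale maps_on_generators)
  then show ?thesis
    unfolding X_def Y_def by (simp only: tns_linear) (simp add: algebra_simps)
qed

lemma Dl_Y:
  "Dl (Y n) = tns (Y n) a + tns d (Y n) + \<iota>T n * tns (X m) b - \<iota>T n * tns b (X m)"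
proof -
  have "Dl (Y n) = \<iota>T n * (tns a b + tns b d) + (tns c a + tns d c)"
    unfolding Y_def by (simp add: additive.add[OF maps_additive(2)] maps_scale maps_on_generators)
  then show ?thesis
    unfolding X_def Y_def by (simp only: tns_linear) (simp add: algebra_simps)
qed

lemma tau_X:
  assumes "cnj (m / q) = m"
  shows "st (S (X m)) = \<iota> (- 1) * X m"
proof -
  have "st (S (X m)) = d - a - \<iota> (cnj (m / q)) * b"
    unfolding X_def
    by (simp add: additive.add[OF tau_additive] additive.diff[OF tau_additive] tau_scale
        additive.minus[OF maps_additive(1)] maps_scale maps_on_generators
        C_algebraD(4)[OF C_algebra_iota, symmetric]
        mult.assoc[symmetric] divide_inverse)
  then show ?thesis
    unfolding assms X_def
    by (simp add: additive.minus[OF C_algebra_additive[OF C_algebra_iota]]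
        C_algebraD(2)[OF C_algebra_iota] algebra_simps)
qed

lemma tau_Y:
  assumes "norm q = 1" "n / q \<in> \<real>"
  shows "st (S (Y n)) = \<iota> (- inverse q) * Y n"
proof -
  have "st (S (Y n)) = \<iota> (- cnj (n / q)) * b + \<iota> (- cnj q) * c"
    unfolding Y_def
    by (simp add: additive.add[OF tau_additive] tau_scale additive.minus[OF maps_additive(1)]
        maps_scale maps_on_generators C_algebraD(4)[OF C_algebra_iota, symmetric]
        additive.minus[OF C_algebra_additive[OF C_algebra_iota]] mult.assoc[symmetric] divide_inverse)
  also have "\<dots> = \<iota> (- inverse q * n) * b + \<iota> (- inverse q) * c"
    using assms(2) cnj_eq_inverse_if_norm_1[OF assms(1)]
    by (simp only: Reals_cnj_iff) (simp add: divide_inverse mult.commute)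
  finally show ?thesis
    unfolding Y_def
    by (simp add: C_algebraD(4)[OF C_algebra_iota, symmetric] distrib_left mult.assoc[symmetric])
qed

lemma two_sided_coideal_X_Y: "two_sided_coideal \<iota>T tns Dl ep (lin_span \<iota> {X m, Y n})"
  (is "two_sided_coideal _ _ _ _ ?C")
proof -
  let ?T = "{tns i y | i y. i \<in> ?C} \<union> {tns y i | i y. i \<in> ?C}"
  have gens: "X m \<in> ?C" "Y n \<in> ?C"
    by (simp_all add: lin_span_base C_algebra_iota)
  have tensors: "tns (X m) y \<in> lin_span \<iota>T ?T" "tns y (X m) \<in> lin_span \<iota>T ?T"
    "tns (Y n) y \<in> lin_span \<iota>T ?T" "tns y (Y n) \<in> lin_span \<iota>T ?T" for y
    using gens by (intro lin_span_base[OF C_algebra_iotaT]; blast)+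
  have Dl_gens: "Dl (X m) \<in> lin_span \<iota>T ?T" "Dl (Y n) \<in> lin_span \<iota>T ?T"
    unfolding Dl_X[of m n] Dl_Y[of n m]
    by (intro lin_span_add lin_span_diff lin_span_scale C_algebra_iotaT tensors)+
  have "ep ` ?C \<subseteq> {0}"
    by (rule image_lin_span_subset_zero[of ep \<iota>, OF maps_additive(3) maps_scale(3)])
      (simp add: ep_X ep_Y)
  moreover have "Dl ` ?C \<subseteq> lin_span \<iota>T ?T"
    by (rule image_lin_span_subset[of \<iota>T Dl \<iota> "\<lambda>z. z",
          OF C_algebra_iotaT maps_additive(2) maps_scale(2)])
      (use Dl_gens in auto)
  ultimately show ?thesis
    unfolding two_sided_coideal_def image_subset_iff singleton_iff by (rule conjI)
qed

lemma tau_invariant_X_Y: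
  assumes "norm q = 1" "cnj (m / q) = m" "n / q \<in> \<real>"
  shows "tau_invariant st S (lin_span \<iota> {X m, Y n})"
proof -
  have tau_gens: "st (S (X m)) \<in> lin_span \<iota> {X m, Y n}" "st (S (Y n)) \<in> lin_span \<iota> {X m, Y n}"
    unfolding tau_X[OF assms(2)] tau_Y[OF assms(1,3)]
    by (simp_all add: lin_span_scale lin_span_base C_algebra_iota)
  have "(\<lambda>x. st (S x)) ` lin_span \<iota> {X m, Y n} \<subseteq> lin_span \<iota> {X m, Y n}"
    by (rule image_lin_span_subset[of \<iota> "\<lambda>x. st (S x)" \<iota> cnj,
          OF C_algebra_iota tau_additive tau_scale])
      (use tau_gens in auto)
  then show ?thesis
    unfolding tau_invariant_def image_subset_iff .
qed

end

theorem proposition5: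
  fixes q sq :: complex and \<mu> \<nu> :: real
    and \<iota> :: "complex \<Rightarrow> 'a::ring_1" and \<iota>T :: "complex \<Rightarrow> 't::ring_1"
    and tns :: "'a \<Rightarrow> 'a \<Rightarrow> 't" and st S :: "'a \<Rightarrow> 'a" and Dl :: "'a \<Rightarrow> 't"
    and ep :: "'a \<Rightarrow> complex" and a b c d :: 'a
  assumes "norm q = 1"
    and "\<forall>n::nat. n > 0 \<longrightarrow> q ^ n \<noteq> 1"
    and "sq ^ 2 = q"
    and "SLq2R q \<iota> \<iota>T tns st Dl ep S a b c d"
  defines "C \<equiv> lin_span \<iota> {a - d + \<iota> (2 * sq * complex_of_real \<mu>) * b,
                            \<iota> (q * complex_of_real \<nu>) * b + c}"
  shows "two_sided_coideal \<iota>T tns Dl ep C \<and> tau_invariant st S C"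
proof -
  interpret SLq2R_algebra q \<iota> \<iota>T tns st Dl ep S a b c d
    by (rule SLq2R_algebra.intro[OF assms(4)])
  define m where "m = 2 * sq * complex_of_real \<mu>"
  define n where "n = q * complex_of_real \<nu>"
  have C: "C = lin_span \<iota> {X m, Y n}"
    unfolding C_def X_def Y_def m_def n_def ..
  have "norm sq ^ 2 = 1"
    using assms(1,3) by (simp flip: norm_power)
  then have sq: "norm sq = 1"
    using norm_ge_zero[of sq] by (simp add: power2_eq_1_iff)
  then have "sq \<noteq> 0"
    by auto
  then have m: "cnj (m / q) = m"
    unfolding m_def assms(3)[symmetric] using cnj_eq_inverse_if_norm_1[OF sq]
    by (simp add: power2_eq_square field_simps)
  have "q \<noteq> 0"
    using assms(1) by auto
  then have n: "n / q \<in> \<real>"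
    by (simp add: n_def)
  show ?thesis
    unfolding C by (intro conjI two_sided_coideal_X_Y tau_invariant_X_Y assms(1) m n)
qed

end
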